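(* Let $0\le\lambda<\gamma\le\delta$. Let $\mathfrak{f}\in\mathcal{R}_H^0(\gamma,\delta,\lambda)$ and let $\varphi\in\mathcal{K}$. Then $\mathfrak{f}\,\widetilde{\ast}\,\varphi\in\mathcal{R}_H^0(\gamma,\delta,\lambda)$.
   Context: Let $\mathcal{U}=\{z\in\mathbb{C}:|z|<1\}$. $\mathcal{K}$ is the class of analytic univalent functions $\varphi$ in $\mathcal{U}$ with $\varphi(0)=0$, $\varphi'(0)=1$ that map $\mathcal{U}$ onto a convex domain. $\mathcal{H}^0$ denotes the class of complex-valued harmonic functions $\mathfrak{f}=\mathfrak{s}+\overline{\mathfrak{t}}$ on $\mathcal{U}$, where $\mathfrak{s}(z)=z+\sum_{m\ge2}a_mz^m$ and $\mathfrak{t}(z)=\sum_{m\ge2}b_mz^m$ are analytic in $\mathcal{U}$. For real $0\le\lambda<\gamma\le\delta$, $\mathcal{R}_H^0(\gamma,\delta,\lambda)$ is the class of $\mathfrak{f}=\mathfrak{s}+\overline{\mathfrak{t}}\in\mathcal{H}^0$ such that for all $z\in\mathcal{U}$, $\mathrm{Re}\left[\gamma\mathfrak{s}'(z)+\delta z\mathfrak{s}''(z)+\frac{\delta-\gamma}{2}z^2\mathfrak{s}'''(z)-\lambda\right]>\left|\gamma\mathfrak{t}'(z)+\delta z\mathfrak{t}''(z)+\frac{\delta-\gamma}{2}z^2\mathfrak{t}'''(z)\right|$. For analytic $g(z)=\sum c_mz^m$, $h(z)=\sum d_mz^m$, $(g\ast h)(z)=\sum c_md_mz^m$. For harmonic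 $\mathfrak{f}=\mathfrak{s}+\overline{\mathfrak{t}}$ and analytic $\varphi$, $\mathfrak{f}\,\widetilde{\ast}\,\varphi=\mathfrak{s}\ast\varphi+\overline{\mathfrak{t}\ast\varphi}$. *)

theory Defs
  imports "HOL-Complex_Analysis.Complex_Analysis"
begin

definition tcoeff :: "(complex \<Rightarrow> complex) \<Rightarrow> nat \<Rightarrow> complex" where
  "tcoeff g n = (deriv ^^ n) g 0 / of_nat (fact n)"

definition hadamard :: "(complex \<Rightarrow> complex) \<Rightarrow> (complex \<Rightarrow> complex) \<Rightarrow> complex \<Rightarrow> complex" where
  "hadamard g h z = (\<Sum>m. tcoeff g m * tcoeff h m * z ^ m)"

definition convK :: "(complex \<Rightarrow> complex) \<Rightarrow> bool" where
  "convK \<phi> \<longleftrightarrow> \<phi> holomorphic_on ball 0 1 \<and> \<phi> 0 = 0 \<and> deriv \<phi> 0 = 1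
     \<and> inj_on \<phi> (ball 0 1) \<and> convex (\<phi> ` ball 0 1)"

text \<open>Class H^0: harmonic f = s + conj t given by the pair (s, t) of analytic functions
  with s(z) = z + ..., t(z) = b_2 z^2 + ...\<close>
definition classH0 :: "(complex \<Rightarrow> complex) \<Rightarrow> (complex \<Rightarrow> complex) \<Rightarrow> bool" where
  "classH0 s t \<longleftrightarrow> s holomorphic_on ball 0 1 \<and> t holomorphic_on ball 0 1
     \<and> s 0 = 0 \<and> deriv s 0 = 1 \<and> t 0 = 0 \<and> deriv t 0 = 0"

definition Lop :: "real \<Rightarrow> real \<Rightarrow> (complex \<Rightarrow> complex) \<Rightarrow> complex \<Rightarrow> complex" where
  "Lop \<gamma> \<delta> g z = of_real \<gamma> * deriv g z + of_real \<delta> * z * (deriv ^^ 2) g z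
      + of_real ((\<delta> - \<gamma>) / 2) * z ^ 2 * (deriv ^^ 3) g z"

definition RH0 :: "real \<Rightarrow> real \<Rightarrow> real \<Rightarrow> (complex \<Rightarrow> complex) \<Rightarrow> (complex \<Rightarrow> complex) \<Rightarrow> bool" where
  "RH0 \<gamma> \<delta> lam s t \<longleftrightarrow> classH0 s t \<and>
     (\<forall>z\<in>ball 0 1. Re (Lop \<gamma> \<delta> s z - of_real lam) > norm (Lop \<gamma> \<delta> t z))"

end

(*
  On Taylor coefficients the operator L of the class R_H^0 acts diagonally after an index shift,
  L g = sum k_n a_(n+1) z^n, so L (g * phi) = (L g) * P for the Hadamard product *, where
  P(z) = phi(z) / z.  For convex phi the Marx-Strohhaecker theorem gives Re P >= 1/2; it follows
  from the Schwarz lemma and Julia's lemma, applied to maps built from the inverse of phi and the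
  convexity of its image.  Writing (Q * P)(z) as the mean of Q(w) P(z / w) over a circle |w| = rho
  and adding the mean of conj(Q(w)) P(z / w), which is conj(Q(0)), shows that Re Q > 0 on the disc
  forces Re (Q * P) > 0.  Taking Q = L s + e L t - lam with |e| = 1 chosen so that
  e (L t * P)(z) = -|(L t * P)(z)| gives the defining inequality of R_H^0 for the convolutions.
*)
theory Submission
  imports Defs
begin

section \<open>Power series on the unit disc\<close>

lemma norm_circlepath_0 [simp]: "norm (circlepath 0 r s) = \<bar>r\<bar>"
  by (simp add: circlepath norm_mult)

lemma circlepath_0_eq_0_iff [simp]: "circlepath 0 r s = 0 \<longleftrightarrow> r = 0"
  by (metis norm_circlepath_0 norm_eq_zero abs_eq_0)

lemma cnj_circlepath_0: "cnj (circlepath 0 r s) = of_real (r\<^sup>2) / circlepath 0 r s"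
  by (cases "r = 0") (simp_all add: field_simps complex_norm_square[symmetric] flip: of_real_power)

lemma has_integral_circlepath_higher_deriv:
  assumes g: "g holomorphic_on ball 0 R" and r: "0 < r" "r < R"
  shows "((\<lambda>s. g (circlepath 0 r s) / circlepath 0 r s ^ k) has_integral (deriv ^^ k) g 0 / fact k) {0..1}"
proof -
  have "cball 0 r \<subseteq> ball (0::complex) R"
    using r by auto
  then have "continuous_on (cball 0 r) g" "g holomorphic_on ball 0 r"
    using g holomorphic_on_subset holomorphic_on_imp_continuous_on ball_subset_cball by blast+
  from Cauchy_has_contour_integral_higher_derivative_circlepath[OF this, of 0 k] r
  have integral: "((\<lambda>s. g (circlepath 0 r s) / circlepath 0 r s ^ Suc k * vector_derivative (circlepath 0 r) (at s))
          has_integral (2 * pi * \<i>) * ((deriv ^^ k) g 0 / fact k)) {0..1}"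
    by (simp add: has_contour_integral)
  have integrand: "g (circlepath 0 r s) / circlepath 0 r s ^ Suc k * vector_derivative (circlepath 0 r) (at s)
      = (2 * pi * \<i>) * (g (circlepath 0 r s) / circlepath 0 r s ^ k)" for s
  proof -
    have "vector_derivative (circlepath 0 r) (at s) = 2 * pi * \<i> * circlepath 0 r s"
      by (simp only: vector_derivative_circlepath) (simp add: circlepath)
    moreover have "circlepath 0 r s \<noteq> 0"
      using r by (metis norm_circlepath_0 norm_zero abs_of_pos less_irrefl)
    ultimately show ?thesis
      by (simp add: field_simps)
  qed
  from has_integral_mult_right[OF integral[unfolded integrand], of "1 / (2 * pi * \<i>)"]
  show ?thesis
    by simp
qed

lemma ereal_norm_less_fps_conv_radius:
  fixes A :: "complex fps" and w :: complex
  shows "1 \<le> fps_conv_radius A \<Longrightarrow> norm w < 1 \<Longrightarrow> ereal (norm w) < fps_conv_radius A"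
  using less_le_trans[of "ereal (norm w)" 1] by simp

lemma one_le_fps_conv_radius_add:
  "1 \<le> fps_conv_radius A \<Longrightarrow> 1 \<le> fps_conv_radius B \<Longrightarrow> 1 \<le> fps_conv_radius (A + B :: complex fps)"
  using fps_conv_radius_add[of A B] by (simp add: min_def split: if_splits)

lemma one_le_fps_conv_radius_diff:
  "1 \<le> fps_conv_radius A \<Longrightarrow> 1 \<le> fps_conv_radius B \<Longrightarrow> 1 \<le> fps_conv_radius (A - B :: complex fps)"
  using fps_conv_radius_diff[of A B] by (simp add: min_def split: if_splits)

lemma one_le_fps_conv_radius_mult:
  "1 \<le> fps_conv_radius A \<Longrightarrow> 1 \<le> fps_conv_radius B \<Longrightarrow> 1 \<le> fps_conv_radius (A * B :: complex fps)"
  using fps_conv_radius_mult[of A B] by (simp add: min_def split: if_splits)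

lemma holomorphic_on_eval_fps_ball:
  "1 \<le> fps_conv_radius (A :: complex fps) \<Longrightarrow> eval_fps A holomorphic_on ball 0 1"
  by (rule holomorphic_on_eval_fps) (auto simp: subset_eq intro: ereal_norm_less_fps_conv_radius)

lemma continuous_on_eval_fps_circlepath:
  assumes "1 \<le> fps_conv_radius (A :: complex fps)" "\<bar>\<rho>\<bar> < 1"
  shows "continuous_on S (\<lambda>s. eval_fps A (circlepath 0 \<rho> s))"
proof (rule continuous_on_eval_fps')
  show "continuous_on S (circlepath 0 \<rho>)"
    unfolding circlepath by (intro continuous_intros)
  have "ereal \<bar>\<rho>\<bar> < fps_conv_radius A"
    using ereal_norm_less_fps_conv_radius[OF assms(1), of "of_real \<rho>"] assms(2) by simp
  then show "circlepath 0 \<rho> ` S \<subseteq> eball 0 (fps_conv_radius A)"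
    by auto
qed

definition fps_hadamard :: "'a::times fps \<Rightarrow> 'a fps \<Rightarrow> 'a fps" where
  "fps_hadamard A B = Abs_fps (\<lambda>n. fps_nth A n * fps_nth B n)"

lemma fps_hadamard_nth [simp]: "fps_nth (fps_hadamard A B) n = fps_nth A n * fps_nth B n"
  by (simp add: fps_hadamard_def)

lemma fps_conv_radius_hadamard:
  fixes A B :: "complex fps"
  assumes A: "1 \<le> fps_conv_radius A" and B: "1 \<le> fps_conv_radius B"
  shows "1 \<le> fps_conv_radius (fps_hadamard A B)"
  unfolding fps_conv_radius_def
proof (rule conv_radius_geI_ex')
  fix r :: real
  assume r: "0 < r" "ereal r < 1"
  define \<rho> where "\<rho> = sqrt r"
  have \<rho>: "norm (of_real \<rho> :: complex) < 1" "of_real r = (of_real \<rho> * of_real \<rho> :: complex)"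
    using r by (simp_all add: \<rho>_def flip: of_real_mult)
  have "(\<lambda>n. fps_nth A n * of_real \<rho> ^ n) \<longlonglongrightarrow> 0"
    by (intro summable_LIMSEQ_zero summable_fps ereal_norm_less_fps_conv_radius A \<rho>(1))
  then have "Bseq (\<lambda>n. fps_nth A n * of_real \<rho> ^ n)"
    using convergent_imp_Bseq convergentI by blast
  then obtain M where M: "\<And>n. norm (fps_nth A n * of_real \<rho> ^ n) \<le> M"
    unfolding Bseq_def by blast
  have "summable (\<lambda>n. norm (fps_nth B n * of_real \<rho> ^ n))"
    by (intro norm_summable_fps ereal_norm_less_fps_conv_radius B \<rho>(1))
  then have summable_bound: "summable (\<lambda>n. M * norm (fps_nth B n * of_real \<rho> ^ n))"
    by (rule summable_mult)
  have bound: "norm (fps_nth (fps_hadamard A B) n * of_real r ^ n) \<le> M * norm (fps_nth B n * of_real \<rho> ^ n)" for n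
  proof -
    have "norm (fps_nth (fps_hadamard A B) n * of_real r ^ n)
        = norm (fps_nth A n * of_real \<rho> ^ n) * norm (fps_nth B n * of_real \<rho> ^ n)"
      by (simp add: \<rho>(2) power_mult_distrib norm_mult mult_ac)
    also have "\<dots> \<le> M * norm (fps_nth B n * of_real \<rho> ^ n)"
      by (rule mult_right_mono[OF M]) simp
    finally show ?thesis .
  qed
  show "summable (\<lambda>n. fps_nth (fps_hadamard A B) n * of_real r ^ n)"
    by (rule summable_comparison_test'[OF summable_bound bound])
qed

definition taylor_fps :: "(complex \<Rightarrow> complex) \<Rightarrow> complex fps" where
  "taylor_fps g = Abs_fps (tcoeff g)"

lemma taylor_fps_nth [simp]: "fps_nth (taylor_fps g) n = tcoeff g n"
  by (simp add: taylor_fps_def)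

lemma tcoeff_0: "tcoeff g 0 = g 0"
  by (simp add: tcoeff_def)

lemma tcoeff_1: "tcoeff g (Suc 0) = deriv g 0"
  by (simp add: tcoeff_def)

lemma sums_taylor_fps:
  assumes "g holomorphic_on ball 0 1" "norm w < 1"
  shows "(\<lambda>n. fps_nth (taylor_fps g) n * w ^ n) sums g w"
  using holomorphic_power_series[OF assms(1), of w] assms(2) by (simp add: tcoeff_def)

lemma fps_conv_radius_taylor_fps:
  assumes "g holomorphic_on ball 0 1"
  shows "1 \<le> fps_conv_radius (taylor_fps g)"
  unfolding fps_conv_radius_def
proof (rule conv_radius_geI_ex')
  fix r :: real
  assume "0 < r" "ereal r < 1"
  then show "summable (\<lambda>n. fps_nth (taylor_fps g) n * of_real r ^ n)"
    by (intro sums_summable[OF sums_taylor_fps[OF assms]]) simp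
qed

lemma eval_taylor_fps:
  assumes "g holomorphic_on ball 0 1" "norm w < 1"
  shows "eval_fps (taylor_fps g) w = g w"
  unfolding eval_fps_def using sums_unique[OF sums_taylor_fps[OF assms]] by simp

lemma taylor_fps_eval_fps:
  assumes "0 < fps_conv_radius A"
  shows "taylor_fps (eval_fps A) = A"
  by (rule fps_ext) (simp add: tcoeff_def fps_nth_conv_deriv[OF assms])

lemma hadamard_eq_eval_fps: "hadamard g h = eval_fps (fps_hadamard (taylor_fps g) (taylor_fps h))"
  by (rule ext) (simp add: hadamard_def eval_fps_def)

lemma fps_conv_radius_higher_deriv:
  fixes A :: "complex fps"
  shows "1 \<le> fps_conv_radius A \<Longrightarrow> 1 \<le> fps_conv_radius ((fps_deriv ^^ k) A)"
  by (induction k) (auto intro: order_trans fps_conv_radius_deriv)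

lemma higher_deriv_eval_fps:
  fixes A :: "complex fps"
  assumes A: "1 \<le> fps_conv_radius A" and z: "norm z < 1"
  shows "(deriv ^^ k) (eval_fps A) z = eval_fps ((fps_deriv ^^ k) A) z"
  using z
proof (induction k arbitrary: z)
  case 0
  then show ?case by simp
next
  case (Suc k)
  have "\<forall>\<^sub>F w in nhds z. (deriv ^^ k) (eval_fps A) w = eval_fps ((fps_deriv ^^ k) A) w"
    using eventually_nhds_in_open[of "ball 0 1" z] Suc by (auto elim!: eventually_mono)
  then have "deriv ((deriv ^^ k) (eval_fps A)) z = deriv (eval_fps ((fps_deriv ^^ k) A)) z"
    by (rule deriv_cong_ev) simp
  also have "\<dots> = eval_fps (fps_deriv ((fps_deriv ^^ k) A)) z"
    by (intro eval_fps_deriv[symmetric] ereal_norm_less_fps_conv_radius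
          fps_conv_radius_higher_deriv A Suc.prems)
  finally show ?case by simp
qed

lemma higher_deriv_eq_eval_taylor_fps:
  assumes g: "g holomorphic_on ball 0 1" and z: "norm z < 1"
  shows "(deriv ^^ k) g z = eval_fps ((fps_deriv ^^ k) (taylor_fps g)) z"
proof -
  have "\<forall>\<^sub>F w in nhds z. g w = eval_fps (taylor_fps g) w"
    using eventually_nhds_in_open[of "ball 0 1" z] z by (auto elim!: eventually_mono simp: eval_taylor_fps[OF g])
  then have "(deriv ^^ k) g z = (deriv ^^ k) (eval_fps (taylor_fps g)) z"
    by (rule higher_deriv_cong_ev) simp
  also have "\<dots> = eval_fps ((fps_deriv ^^ k) (taylor_fps g)) z"
    by (rule higher_deriv_eval_fps[OF fps_conv_radius_taylor_fps[OF g] z])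
  finally show ?thesis .
qed

lemma uniform_limit_mult_eval_fps_circlepath:
  fixes q :: "real \<Rightarrow> complex" and P :: "complex fps"
  assumes q: "continuous_on {0..1} q" and P: "1 \<le> fps_conv_radius P" and z: "norm z < \<rho>"
  shows "uniform_limit {0..1} (\<lambda>n s. \<Sum>i<n. q s * (fps_nth P i * (z / circlepath 0 \<rho> s) ^ i))
           (\<lambda>s. q s * eval_fps P (z / circlepath 0 \<rho> s)) sequentially"
proof -
  have \<rho>: "0 < \<rho>"
    using z norm_ge_zero by (rule le_less_trans[rotated])
  define w where "w s = z / circlepath 0 \<rho> s" for s
  have norm_w: "norm (w s) = norm z / \<rho>" for s
    using \<rho> by (simp add: w_def norm_divide)
  have ratio: "norm z / \<rho> < 1"
    using z \<rho> by simp
  then have "norm (of_real (norm z / \<rho>) :: complex) < 1"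
    using \<rho> by (simp add: norm_divide)
  then have "summable (\<lambda>i. norm (fps_nth P i * of_real (norm z / \<rho>) ^ i))"
    by (intro norm_summable_fps ereal_norm_less_fps_conv_radius P)
  then have summable_bound: "summable (\<lambda>i. B * norm (fps_nth P i * of_real (norm z / \<rho>) ^ i))" for B
    by (rule summable_mult)
  obtain B where B: "\<And>s. s \<in> {0..1} \<Longrightarrow> norm (q s) \<le> B"
    using compact_imp_bounded[OF compact_continuous_image[OF q compact_Icc]]
    unfolding bounded_iff by (metis image_eqI)
  have "norm (q s * (fps_nth P i * w s ^ i)) \<le> B * norm (fps_nth P i * of_real (norm z / \<rho>) ^ i)"
    if "s \<in> {0..1}" for i s
    using \<rho> mult_right_mono[OF B[OF that], of "norm (fps_nth P i * of_real (norm z / \<rho>) ^ i)"]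
    by (simp add: norm_mult norm_power norm_w norm_divide)
  from Weierstrass_m_test[OF this summable_bound]
  have "uniform_limit {0..1} (\<lambda>n s. \<Sum>i<n. q s * (fps_nth P i * w s ^ i))
          (\<lambda>s. \<Sum>i. q s * (fps_nth P i * w s ^ i)) sequentially" .
  moreover have "(\<Sum>i. q s * (fps_nth P i * w s ^ i)) = q s * eval_fps P (w s)" for s
  proof -
    have "summable (\<lambda>i. fps_nth P i * w s ^ i)"
      using ratio by (intro summable_fps ereal_norm_less_fps_conv_radius P) (simp add: norm_w)
    then show ?thesis
      by (simp add: eval_fps_def suminf_mult)
  qed
  ultimately show ?thesis
    by (simp add: w_def)
qed

lemma has_integral_mult_eval_fps_circlepath:
  fixes q :: "real \<Rightarrow> complex" and P :: "complex fps"
  assumes q: "continuous_on {0..1} q"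
    and coeff: "\<And>i. ((\<lambda>s. q s / circlepath 0 \<rho> s ^ i) has_integral c i) {0..1}"
    and P: "1 \<le> fps_conv_radius P" and z: "norm z < \<rho>"
    and S: "(\<lambda>i. c i * fps_nth P i * z ^ i) sums S"
  shows "((\<lambda>s. q s * eval_fps P (z / circlepath 0 \<rho> s)) has_integral S) {0..1}"
proof -
  have \<rho>: "0 < \<rho>"
    using z norm_ge_zero by (rule le_less_trans[rotated])
  define f where "f i s = q s * (fps_nth P i * (z / circlepath 0 \<rho> s) ^ i)" for i s
  have "continuous_on {0..1} (\<lambda>s. \<Sum>i<n. f i s)" for n
    using \<rho> unfolding f_def circlepath by (intro continuous_intros q) auto
  with uniform_limit_mult_eval_fps_circlepath[OF q P z]
  obtain I J where
    I: "\<And>n. ((\<lambda>s. \<Sum>i<n. f i s) has_integral I n) {0..1}" and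
    J: "((\<lambda>s. q s * eval_fps P (z / circlepath 0 \<rho> s)) has_integral J) {0..1}" and "I \<longlonglongrightarrow> J"
    unfolding f_def by (rule uniform_limit_integral) auto
  have partial_sums: "((\<lambda>s. \<Sum>i<n. f i s) has_integral (\<Sum>i<n. c i * fps_nth P i * z ^ i)) {0..1}" for n
  proof (intro has_integral_sum)
    fix i
    have "f i s = (fps_nth P i * z ^ i) * (q s / circlepath 0 \<rho> s ^ i)" for s
      by (simp add: f_def power_divide)
    then show "((\<lambda>s. f i s) has_integral c i * fps_nth P i * z ^ i) {0..1}"
      using has_integral_mult_right[OF coeff, of "fps_nth P i * z ^ i"] by (simp add: mult_ac)
  qed simp
  have "I = (\<lambda>n. \<Sum>i<n. c i * fps_nth P i * z ^ i)"
    using I partial_sums has_integral_unique by blast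
  with \<open>I \<longlonglongrightarrow> J\<close> S have "J = S"
    unfolding sums_def using LIMSEQ_unique by blast
  with J show ?thesis
    by simp
qed

lemma has_integral_eval_fps_hadamard:
  fixes Q P :: "complex fps"
  assumes Q: "1 \<le> fps_conv_radius Q" and P: "1 \<le> fps_conv_radius P"
    and z: "norm z < \<rho>" and \<rho>: "\<rho> < 1"
  shows "((\<lambda>s. eval_fps Q (circlepath 0 \<rho> s) * eval_fps P (z / circlepath 0 \<rho> s))
           has_integral eval_fps (fps_hadamard Q P) z) {0..1}"
proof (rule has_integral_mult_eval_fps_circlepath[OF _ _ P z])
  have \<rho>_pos: "0 < \<rho>"
    using z norm_ge_zero by (rule le_less_trans[rotated])
  then show "continuous_on {0..1} (\<lambda>s. eval_fps Q (circlepath 0 \<rho> s))"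
    using \<rho> by (intro continuous_on_eval_fps_circlepath Q) simp
  have "0 < fps_conv_radius Q"
    using Q by (simp add: less_le_trans[of 0 1])
  then show "((\<lambda>s. eval_fps Q (circlepath 0 \<rho> s) / circlepath 0 \<rho> s ^ i) has_integral fps_nth Q i) {0..1}" for i
    using has_integral_circlepath_higher_deriv[OF holomorphic_on_eval_fps_ball[OF Q] \<rho>_pos \<rho>, of i]
    by (simp add: fps_nth_conv_deriv)
  show "(\<lambda>i. fps_nth Q i * fps_nth P i * z ^ i) sums eval_fps (fps_hadamard Q P) z"
    using sums_eval_fps[OF ereal_norm_less_fps_conv_radius[OF fps_conv_radius_hadamard[OF Q P]], of z]
      z \<rho> by simp
qed

lemma has_integral_cnj_eval_fps_circlepath:
  fixes Q P :: "complex fps"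
  assumes Q: "1 \<le> fps_conv_radius Q" and P: "1 \<le> fps_conv_radius P"
    and z: "norm z < \<rho>" and \<rho>: "\<rho> < 1"
  shows "((\<lambda>s. cnj (eval_fps Q (circlepath 0 \<rho> s)) * eval_fps P (z / circlepath 0 \<rho> s))
           has_integral cnj (fps_nth Q 0) * fps_nth P 0) {0..1}"
proof (rule has_integral_mult_eval_fps_circlepath[OF _ _ P z])
  have \<rho>_pos: "0 < \<rho>"
    using z norm_ge_zero by (rule le_less_trans[rotated])
  then show "continuous_on {0..1} (\<lambda>s. cnj (eval_fps Q (circlepath 0 \<rho> s)))"
    using \<rho> by (intro continuous_on_cnj continuous_on_eval_fps_circlepath Q) simp
  show "((\<lambda>s. cnj (eval_fps Q (circlepath 0 \<rho> s)) / circlepath 0 \<rho> s ^ i)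
          has_integral (if i = 0 then cnj (fps_nth Q 0) else 0)) {0..1}" for i
  proof -
    define g where "g u = eval_fps Q u * u ^ i" for u
    have "g holomorphic_on ball 0 1"
      unfolding g_def by (intro holomorphic_intros holomorphic_on_eval_fps_ball Q)
    from has_integral_circlepath_higher_deriv[OF this \<rho>_pos \<rho>, of 0]
    have "((\<lambda>s. g (circlepath 0 \<rho> s)) has_integral g 0) {0..1}"
      by simp
    then have "((\<lambda>s. cnj (g (circlepath 0 \<rho> s))) has_integral cnj (g 0)) {0..1}"
      using has_integral_cnj[of "\<lambda>s. g (circlepath 0 \<rho> s)"] by (simp add: o_def)
    then have "((\<lambda>s. cnj (g (circlepath 0 \<rho> s)) / of_real (\<rho> ^ (2 * i)))
                 has_integral cnj (g 0) / of_real (\<rho> ^ (2 * i))) {0..1}"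
      by (rule has_integral_divide)
    moreover have "cnj (g (circlepath 0 \<rho> s)) / of_real (\<rho> ^ (2 * i))
        = cnj (eval_fps Q (circlepath 0 \<rho> s)) / circlepath 0 \<rho> s ^ i" for s
      using \<rho>_pos by (simp add: g_def cnj_circlepath_0 power_mult power2_eq_square field_simps)
    moreover have "cnj (g 0) / of_real (\<rho> ^ (2 * i)) = (if i = 0 then cnj (fps_nth Q 0) else 0)"
      by (simp add: g_def eval_fps_at_0)
    ultimately show ?thesis
      by simp
  qed
  have "(\<lambda>i. (if i = 0 then cnj (fps_nth Q 0) else 0) * fps_nth P i * z ^ i)
      = (\<lambda>i. if i = 0 then cnj (fps_nth Q 0) * fps_nth P 0 else 0)"
    by auto
  then show "(\<lambda>i. (if i = 0 then cnj (fps_nth Q 0) else 0) * fps_nth P i * z ^ i)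
               sums (cnj (fps_nth Q 0) * fps_nth P 0)"
    using sums_single[of 0 "\<lambda>_. cnj (fps_nth Q 0) * fps_nth P 0"] by simp
qed

text \<open>Since \<open>Q(w) p + conj (Q(w)) p = 2 Re (Q(w)) p\<close>, the two mean value formulas give
  \<open>Re (Q \<star> P)(z) + Re Q\<^sub>0 = \<integral> 2 Re (Q(w)) Re p \<ge> \<integral> Re (Q(w)) = Re Q\<^sub>0\<close> with \<open>p = P(z / w)\<close>.\<close>
lemma Re_eval_fps_hadamard_nonneg:
  fixes Q P :: "complex fps"
  assumes Q: "1 \<le> fps_conv_radius Q" and P: "1 \<le> fps_conv_radius P" and P0: "fps_nth P 0 = 1"
    and Re_P: "\<And>w. norm w < 1 \<Longrightarrow> 1/2 \<le> Re (eval_fps P w)"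
    and z: "norm z < \<rho>" and \<rho>: "\<rho> < 1"
    and Re_Q: "\<And>s. s \<in> {0..1} \<Longrightarrow> 0 \<le> Re (eval_fps Q (circlepath 0 \<rho> s))"
  shows "0 \<le> Re (eval_fps (fps_hadamard Q P) z)"
proof -
  have \<rho>_pos: "0 < \<rho>"
    using z norm_ge_zero by (rule le_less_trans[rotated])
  define q where "q s = eval_fps Q (circlepath 0 \<rho> s)" for s
  define p where "p s = eval_fps P (z / circlepath 0 \<rho> s)" for s
  have "((\<lambda>s. q s * p s + cnj (q s) * p s)
          has_integral eval_fps (fps_hadamard Q P) z + cnj (fps_nth Q 0)) {0..1}"
    using has_integral_add[OF has_integral_eval_fps_hadamard[OF Q P z \<rho>]
        has_integral_cnj_eval_fps_circlepath[OF Q P z \<rho>]]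
    by (simp add: q_def p_def P0)
  from has_integral_linear[OF this bounded_linear_Re]
  have sum: "((\<lambda>s. 2 * Re (q s) * Re (p s)) has_integral Re (eval_fps (fps_hadamard Q P) z) + Re (fps_nth Q 0)) {0..1}"
    by (simp add: o_def algebra_simps)
  have mean: "((\<lambda>s. Re (q s)) has_integral Re (fps_nth Q 0)) {0..1}"
    using has_integral_linear[OF has_integral_circlepath_higher_deriv[OF holomorphic_on_eval_fps_ball[OF Q] \<rho>_pos \<rho>, of 0] bounded_linear_Re]
    by (simp add: q_def o_def eval_fps_at_0)
  have le: "Re (q s) \<le> 2 * Re (q s) * Re (p s)" if "s \<in> {0..1}" for s
  proof -
    have "1/2 \<le> Re (p s)"
      unfolding p_def using z \<rho>_pos by (intro Re_P) (simp add: norm_divide)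
    moreover have "0 \<le> Re (q s)"
      unfolding q_def by (rule Re_Q[OF that])
    ultimately have "Re (q s) * (1/2) \<le> Re (q s) * Re (p s)"
      by (rule mult_left_mono)
    then show ?thesis
      by simp
  qed
  have "Re (fps_nth Q 0) \<le> Re (eval_fps (fps_hadamard Q P) z) + Re (fps_nth Q 0)"
    by (rule has_integral_le[OF mean sum le])
  then show ?thesis
    by simp
qed

lemma Re_eval_fps_hadamard_pos:
  fixes Q P :: "complex fps"
  assumes Q: "1 \<le> fps_conv_radius Q" and P: "1 \<le> fps_conv_radius P" and P0: "fps_nth P 0 = 1"
    and Re_P: "\<And>w. norm w < 1 \<Longrightarrow> 1/2 \<le> Re (eval_fps P w)"
    and Re_Q: "\<And>w. norm w < 1 \<Longrightarrow> 0 < Re (eval_fps Q w)" and z: "norm z < 1"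
  shows "0 < Re (eval_fps (fps_hadamard Q P) z)"
proof -
  define \<rho> where "\<rho> = (1 + norm z) / 2"
  have \<rho>: "norm z < \<rho>" "\<rho> < 1" "0 < \<rho>"
    using z by (simp_all add: \<rho>_def add_pos_nonneg)
  have "continuous_on {0..1} (\<lambda>s. Re (eval_fps Q (circlepath 0 \<rho> s)))"
    using \<rho> by (intro continuous_on_Re continuous_on_eval_fps_circlepath Q) simp
  then have "\<exists>s0\<in>{0..1}. \<forall>s\<in>{0..1}. Re (eval_fps Q (circlepath 0 \<rho> s0)) \<le> Re (eval_fps Q (circlepath 0 \<rho> s))"
    by (intro continuous_attains_inf) auto
  then obtain s0 where min: "\<And>s. s \<in> {0..1} \<Longrightarrow>
      Re (eval_fps Q (circlepath 0 \<rho> s0)) \<le> Re (eval_fps Q (circlepath 0 \<rho> s))"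
    by blast
  define m where "m = Re (eval_fps Q (circlepath 0 \<rho> s0))"
  have "0 < m"
    unfolding m_def using \<rho> by (intro Re_Q) simp
  define Q' where "Q' = Q - fps_const (of_real m)"
  have Q': "1 \<le> fps_conv_radius Q'"
    unfolding Q'_def by (intro one_le_fps_conv_radius_diff Q) simp
  have eval_Q': "eval_fps Q' (circlepath 0 \<rho> s) = eval_fps Q (circlepath 0 \<rho> s) - of_real m" for s
  proof -
    have "ereal \<rho> < fps_conv_radius Q"
      using ereal_norm_less_fps_conv_radius[OF Q, of "of_real \<rho>"] \<rho> by simp
    with \<rho> show ?thesis
      unfolding Q'_def by (subst eval_fps_diff) simp_all
  qed
  have "0 \<le> Re (eval_fps Q' (circlepath 0 \<rho> s))" if "s \<in> {0..1}" for s
    using min[OF that] by (simp add: eval_Q' m_def)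
  with Q' P P0 Re_P \<rho>(1,2) have "0 \<le> Re (eval_fps (fps_hadamard Q' P) z)"
    by (rule Re_eval_fps_hadamard_nonneg)
  moreover have "fps_hadamard Q' P = fps_hadamard Q P - fps_const (of_real m)"
    unfolding Q'_def using P0 by (intro fps_ext) (simp add: algebra_simps)
  moreover have "eval_fps (fps_hadamard Q P - fps_const (of_real m)) z = eval_fps (fps_hadamard Q P) z - of_real m"
    using z by (subst eval_fps_diff)
      (auto intro: ereal_norm_less_fps_conv_radius fps_conv_radius_hadamard Q P)
  ultimately show ?thesis
    using \<open>0 < m\<close> by simp
qed

section \<open>The Marx--Strohhaecker theorem\<close>

lemma norm_one_minus_cnj_mult_sq:
  fixes a b :: complex
  shows "(norm (1 - cnj a * b))\<^sup>2 - (norm (b - a))\<^sup>2 = (1 - (norm a)\<^sup>2) * (1 - (norm b)\<^sup>2)"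
proof -
  obtain x y u v where "a = Complex x y" "b = Complex u v"
    by (metis complex.exhaust)
  then show ?thesis
    by (simp add: cmod_power2) (simp add: power2_eq_square algebra_simps)
qed

lemma Schwarz_Pick_at_0:
  fixes g :: "complex \<Rightarrow> complex"
  assumes g: "g holomorphic_on ball 0 1" and g_disc: "\<And>w. norm w < 1 \<Longrightarrow> norm (g w) < 1"
    and w: "norm w < 1"
  shows "(1 - (norm w)\<^sup>2) * (norm (1 - cnj (g 0) * g w))\<^sup>2 \<le> (1 - (norm (g 0))\<^sup>2) * (1 - (norm (g w))\<^sup>2)"
proof -
  define a where "a = g 0"
  have a: "norm a < 1"
    unfolding a_def by (rule g_disc) simp
  define M where "M = Moebius_function 0 a \<circ> g"
  have "M holomorphic_on ball 0 1"
    unfolding M_def using g_disc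
    by (intro holomorphic_on_compose_gen[OF g Moebius_function_holomorphic[OF a]]) auto
  moreover have "M 0 = 0"
    by (simp add: M_def a_def Moebius_function_eq_zero)
  moreover have "norm (M z) < 1" if "norm z < 1" for z
    unfolding M_def o_def by (rule Moebius_function_norm_lt_1[OF a g_disc[OF that]])
  ultimately have "norm (M w) \<le> norm w"
    using w by (rule Schwarz_Lemma(1))
  moreover have "1 - cnj a * g w \<noteq> 0"
  proof
    assume "1 - cnj a * g w = 0"
    then have "cnj a * g w = 1"
      by simp
    then have "norm (cnj a * g w) = 1"
      by simp
    moreover have "norm a * norm (g w) < 1 * 1"
      using a g_disc[OF w] by (intro mult_strict_mono') auto
    ultimately show False
      by (simp add: norm_mult)
  qed
  ultimately have "norm (g w - a) \<le> norm w * norm (1 - cnj a * g w)"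
    by (simp add: M_def Moebius_function_simple norm_divide divide_le_eq)
  then have "(norm (g w - a))\<^sup>2 \<le> (norm w)\<^sup>2 * (norm (1 - cnj a * g w))\<^sup>2"
    by (metis norm_ge_zero power_mono power_mult_distrib)
  with norm_one_minus_cnj_mult_sq[of a "g w"] show ?thesis
    unfolding a_def[symmetric] by (simp add: algebra_simps)
qed

text \<open>Along the radius ending at \<open>\<zeta>\<close> write \<open>g(s\<zeta>) = \<zeta> (1 + (s - 1) q(s))\<close>; when \<open>\<zeta>\<close> is
  a fixed point of \<open>g\<close>, \<open>q(s)\<close> is the difference quotient of \<open>g\<close> at \<open>\<zeta>\<close>.\<close>
lemma Julia_radial_estimate:
  fixes g :: "complex \<Rightarrow> complex" and \<zeta> :: complex and s :: real
  assumes g: "g holomorphic_on ball 0 1" and g_disc: "\<And>w. norm w < 1 \<Longrightarrow> norm (g w) < 1"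
    and \<zeta>: "norm \<zeta> = 1" and s: "0 < s" "s < 1"
  defines "q \<equiv> (g (of_real s * \<zeta>) - \<zeta>) / (of_real (s - 1) * \<zeta>)"
  shows "(1 + s) * (norm (1 - cnj (g 0) * g (of_real s * \<zeta>)))\<^sup>2
           \<le> (1 - (norm (g 0))\<^sup>2) * (2 * Re q - (1 - s) * (norm q)\<^sup>2)"
proof -
  let ?w = "of_real s * \<zeta>"
  have "of_real (s - 1) * \<zeta> \<noteq> 0"
    using s \<zeta> by auto
  then have "of_real (s - 1) * \<zeta> * q = g ?w - \<zeta>"
    by (simp add: q_def)
  then have "g ?w = \<zeta> * (1 + of_real (s - 1) * q)"
    by (simp add: algebra_simps)
  then have "(norm (g ?w))\<^sup>2 = (norm (1 + of_real (s - 1) * q))\<^sup>2"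
    using \<zeta> by (simp add: norm_mult)
  also have "\<dots> = 1 - (1 - s) * (2 * Re q - (1 - s) * (norm q)\<^sup>2)"
  proof -
    obtain x y where "q = Complex x y"
      by (metis complex.exhaust)
    then show ?thesis
      by (simp add: cmod_power2) (simp add: power2_eq_square algebra_simps)
  qed
  finally have g_w: "1 - (norm (g ?w))\<^sup>2 = (1 - s) * (2 * Re q - (1 - s) * (norm q)\<^sup>2)"
    by simp
  have "(1 - s) * ((1 + s) * (norm (1 - cnj (g 0) * g ?w))\<^sup>2) = (1 - s\<^sup>2) * (norm (1 - cnj (g 0) * g ?w))\<^sup>2"
    by (simp add: power2_eq_square algebra_simps)
  also have "\<dots> \<le> (1 - (norm (g 0))\<^sup>2) * (1 - (norm (g ?w))\<^sup>2)"
    using Schwarz_Pick_at_0[OF g g_disc, of ?w] s \<zeta> by (simp add: norm_mult)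
  also have "\<dots> = (1 - s) * ((1 - (norm (g 0))\<^sup>2) * (2 * Re q - (1 - s) * (norm q)\<^sup>2))"
    by (simp add: g_w)
  finally show ?thesis
    using s by simp
qed

lemma tendsto_radial_difference_quotient:
  fixes g :: "complex \<Rightarrow> complex"
  assumes deriv: "(g has_field_derivative D) (at \<zeta>)" and \<zeta>: "\<zeta> \<noteq> 0"
  shows "((\<lambda>s. (g (of_real s * \<zeta>) - g \<zeta>) / (of_real (s - 1) * \<zeta>)) \<longlongrightarrow> D) (at_left 1)"
proof -
  have "((\<lambda>s. of_real s * \<zeta>) \<longlongrightarrow> of_real 1 * \<zeta>) (at_left (1::real))"
    by (intro tendsto_intros)
  moreover have "\<forall>\<^sub>F s in at_left (1::real). s \<in> {0<..<1}"
    by (rule eventually_at_left_real) simp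
  then have "\<forall>\<^sub>F s in at_left (1::real). of_real s * \<zeta> \<noteq> \<zeta>"
    by eventually_elim (use \<zeta> in auto)
  ultimately have radial: "filterlim (\<lambda>s. of_real s * \<zeta>) (at \<zeta>) (at_left (1::real))"
    by (simp add: filterlim_at)
  have "((\<lambda>w. (g w - g \<zeta>) / (w - \<zeta>)) \<longlongrightarrow> D) (at \<zeta>)"
    using deriv by (simp add: has_field_derivative_iff)
  from filterlim_compose[OF this radial]
  have "((\<lambda>s. (g (of_real s * \<zeta>) - g \<zeta>) / (of_real s * \<zeta> - \<zeta>)) \<longlongrightarrow> D) (at_left 1)"
    by (simp add: o_def)
  then show ?thesis
    by (simp add: algebra_simps)
qed

lemma norm_one_minus_cnj_mult_unimodular:
  fixes a \<zeta> :: complex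
  assumes "norm \<zeta> = 1"
  shows "norm (1 - cnj a * \<zeta>) = norm (\<zeta> - a)"
proof -
  have "cnj \<zeta> * \<zeta> = 1"
    using assms by (simp add: complex_norm_square[symmetric] mult.commute)
  then have "1 - cnj a * \<zeta> = \<zeta> * cnj (\<zeta> - a)"
    by (simp add: algebra_simps)
  then show ?thesis
    using assms by (simp add: norm_mult flip: complex_cnj_diff)
qed

lemma Julia_lemma:
  fixes g :: "complex \<Rightarrow> complex" and \<zeta> :: complex and t :: real
  assumes g: "g holomorphic_on ball 0 1" and g_disc: "\<And>w. norm w < 1 \<Longrightarrow> norm (g w) < 1"
    and \<zeta>: "norm \<zeta> = 1" and fixed: "g \<zeta> = \<zeta>" and deriv: "(g has_field_derivative of_real t) (at \<zeta>)"
  shows "(norm (\<zeta> - g 0))\<^sup>2 \<le> t * (1 - (norm (g 0))\<^sup>2)"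
proof -
  define a where "a = g 0"
  define q where "q s = (g (of_real s * \<zeta>) - \<zeta>) / (of_real (s - 1) * \<zeta>)" for s :: real
  have "\<zeta> \<noteq> 0"
    using \<zeta> by auto
  then have q_lim: "(q \<longlongrightarrow> of_real t) (at_left 1)"
    using tendsto_radial_difference_quotient[OF deriv] by (simp add: q_def[abs_def] fixed)
  have "((\<lambda>s. of_real s * \<zeta>) \<longlongrightarrow> of_real 1 * \<zeta>) (at_left (1::real))"
    by (intro tendsto_intros)
  then have g_lim: "((\<lambda>s. g (of_real s * \<zeta>)) \<longlongrightarrow> \<zeta>) (at_left (1::real))"
    using isCont_tendsto_compose[OF DERIV_isCont[OF deriv]] by (simp add: fixed)
  have lhs_lim: "((\<lambda>s. (1 + s) * (norm (1 - cnj a * g (of_real s * \<zeta>)))\<^sup>2)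
      \<longlongrightarrow> (1 + 1) * (norm (1 - cnj a * \<zeta>))\<^sup>2) (at_left 1)"
    by (intro tendsto_intros g_lim)
  have rhs_lim: "((\<lambda>s. (1 - (norm a)\<^sup>2) * (2 * Re (q s) - (1 - s) * (norm (q s))\<^sup>2))
      \<longlongrightarrow> (1 - (norm a)\<^sup>2) * (2 * Re (of_real t) - (1 - 1) * (norm (of_real t :: complex))\<^sup>2)) (at_left 1)"
    by (intro tendsto_intros q_lim)
  have "\<forall>\<^sub>F s in at_left (1::real). s \<in> {0<..<1}"
    by (rule eventually_at_left_real) simp
  then have estimate: "\<forall>\<^sub>F s in at_left 1. (1 + s) * (norm (1 - cnj a * g (of_real s * \<zeta>)))\<^sup>2
      \<le> (1 - (norm a)\<^sup>2) * (2 * Re (q s) - (1 - s) * (norm (q s))\<^sup>2)"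
    by eventually_elim (use Julia_radial_estimate[OF g g_disc \<zeta>] in \<open>simp add: a_def q_def\<close>)
  from tendsto_le[OF trivial_limit_at_left_real rhs_lim lhs_lim estimate]
  show ?thesis
    using norm_one_minus_cnj_mult_unimodular[OF \<zeta>, of a] by (simp add: a_def algebra_simps)
qed

lemma Schwarz_Lemma_strict:
  fixes f :: "complex \<Rightarrow> complex"
  assumes f: "f holomorphic_on ball 0 1" and f0: "f 0 = 0"
    and f_disc: "\<And>z. norm z < 1 \<Longrightarrow> norm (f z) < 1"
    and deriv: "norm (deriv f 0) < 1" and \<xi>: "norm \<xi> < 1" "\<xi> \<noteq> 0"
  shows "norm (f \<xi>) < norm \<xi>"
proof -
  have "norm (f \<xi>) \<noteq> norm \<xi>"
  proof
    assume "norm (f \<xi>) = norm \<xi>"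
    with \<xi> obtain \<alpha> where \<alpha>: "\<And>z. norm z < 1 \<Longrightarrow> f z = \<alpha> * z" and "norm \<alpha> = 1"
      using Schwarz_Lemma(3)[OF f f0 f_disc, of 0] by auto
    have "\<forall>\<^sub>F z in nhds 0. f z = \<alpha> * z"
      using eventually_nhds_in_open[of "ball 0 1" 0] by (auto elim!: eventually_mono simp: \<alpha>)
    then have "deriv f 0 = \<alpha>"
      using deriv_cong_ev[of f "\<lambda>z. \<alpha> * z" 0 0] by simp
    with deriv \<open>norm \<alpha> = 1\<close> show False
      by simp
  qed
  with Schwarz_Lemma(1)[OF f f0 f_disc \<xi>(1)] show ?thesis
    by simp
qed

lemma holomorphic_on_ball_scale:
  assumes f: "f holomorphic_on ball 0 1" and c: "norm c \<le> 1"
  shows "(\<lambda>\<xi>. f (\<xi> * c)) holomorphic_on ball 0 1"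
proof (rule holomorphic_on_compose_gen[of "\<lambda>\<xi>. \<xi> * c" _ f "ball 0 1", unfolded o_def])
  show "(\<lambda>\<xi>. \<xi> * c) ` ball 0 1 \<subseteq> ball 0 1"
    using c by (auto simp: norm_mult intro!: le_less_trans[OF mult_left_le])
qed (auto intro: holomorphic_intros f)

lemma norm_convex_combination_less_1:
  fixes x \<zeta> :: complex
  assumes x: "norm x < 1" and \<zeta>: "norm \<zeta> = 1" and t: "0 < t" "t \<le> 1"
  shows "norm (of_real t * x + of_real (1 - t) * \<zeta>) < 1"
proof -
  have "norm (1 - complex_of_real t) = 1 - t"
    using t by (metis abs_of_nonneg diff_ge_0_iff_ge norm_of_real of_real_1 of_real_diff)
  then have "norm (of_real t * x + of_real (1 - t) * \<zeta>) \<le> t * norm x + (1 - t)"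
    using norm_triangle_ineq[of "of_real t * x" "of_real (1 - t) * \<zeta>"] t \<zeta>
    by (simp add: norm_mult)
  also have "\<dots> < 1"
    using mult_strict_left_mono[OF x t(1)] by simp
  finally show ?thesis .
qed

locale convK_inverse =
  fixes \<phi> \<psi> :: "complex \<Rightarrow> complex"
  assumes convK: "convK \<phi>"
    and holomorphic_inverse: "\<psi> holomorphic_on \<phi> ` ball 0 1"
    and inverse: "\<And>z. z \<in> ball 0 1 \<Longrightarrow> \<psi> (\<phi> z) = z"
    and deriv_inverse: "\<And>z. z \<in> ball 0 1 \<Longrightarrow> deriv \<phi> z * deriv \<psi> (\<phi> z) = 1"
begin

lemma holomorphic: "\<phi> holomorphic_on ball 0 1"
  and zero: "\<phi> 0 = 0" and deriv_zero: "deriv \<phi> 0 = 1"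
  and inj: "inj_on \<phi> (ball 0 1)" and convex_image: "convex (\<phi> ` ball 0 1)"
  using convK by (auto simp: convK_def)

lemma inverse_zero: "\<psi> 0 = 0"
  using inverse[of 0] zero by simp

lemma norm_inverse_less_1: "w \<in> \<phi> ` ball 0 1 \<Longrightarrow> norm (\<psi> w) < 1"
  using inverse by auto

lemma convex_combination_in_image:
  assumes "norm u < 1" "norm v < 1" "0 \<le> t" "t \<le> 1"
  shows "of_real t * \<phi> u + of_real (1 - t) * \<phi> v \<in> \<phi> ` ball 0 1"
  using convexD[OF convex_image, of "\<phi> u" "\<phi> v" t "1 - t"] assms
  by (simp add: scaleR_conv_of_real)

lemma deriv_nonzero: "norm z < 1 \<Longrightarrow> deriv \<phi> z \<noteq> 0"
  by (rule holomorphic_injective_imp_regular[OF holomorphic open_ball inj]) simp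

lemma has_field_derivative_scaled:
  assumes "norm (\<xi> * c) < 1"
  shows "((\<lambda>\<xi>. \<phi> (\<xi> * c)) has_field_derivative deriv \<phi> (\<xi> * c) * c) (at \<xi>)"
proof -
  have "(\<phi> has_field_derivative deriv \<phi> (\<xi> * c)) (at (\<xi> * c))"
    using assms by (intro holomorphic_derivI[OF holomorphic open_ball]) simp
  from DERIV_chain2[OF this DERIV_cmult_right[OF DERIV_ident, of c]] show ?thesis
    by (simp add: mult.commute)
qed

lemma has_field_derivative_inverse:
  assumes z: "norm z < 1"
  shows "(\<psi> has_field_derivative inverse (deriv \<phi> z)) (at (\<phi> z))"
proof -
  have "open (\<phi> ` ball 0 1)"
    by (rule open_mapping_thm3[OF holomorphic open_ball inj])
  then have "(\<psi> has_field_derivative deriv \<psi> (\<phi> z)) (at (\<phi> z))"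
    using z by (intro holomorphic_derivI[OF holomorphic_inverse]) simp_all
  moreover have "deriv \<psi> (\<phi> z) = inverse (deriv \<phi> z)"
    using deriv_inverse[of z] deriv_nonzero[OF z] z by (simp add: field_simps)
  ultimately show ?thesis
    by simp
qed

lemma has_field_derivative_inverse_convex_combination_0:
  "((\<lambda>\<xi>. \<psi> (of_real t * \<phi> (\<xi> * x) + of_real (1 - t) * \<phi> (\<xi> * \<zeta>)))
     has_field_derivative of_real t * x + of_real (1 - t) * \<zeta>) (at 0)"
proof -
  have "((\<lambda>\<xi>. of_real t * \<phi> (\<xi> * x) + of_real (1 - t) * \<phi> (\<xi> * \<zeta>))
      has_field_derivative of_real t * x + of_real (1 - t) * \<zeta>) (at 0)"
    using DERIV_add[OF DERIV_cmult[OF has_field_derivative_scaled[of 0 x]]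
        DERIV_cmult[OF has_field_derivative_scaled[of 0 \<zeta>]], of "of_real t" "of_real (1 - t)"]
    by (simp add: deriv_zero)
  moreover have "(\<psi> has_field_derivative 1) (at (of_real t * \<phi> (0 * x) + of_real (1 - t) * \<phi> (0 * \<zeta>)))"
    using has_field_derivative_inverse[of 0] by (simp add: zero deriv_zero)
  ultimately show ?thesis
    using DERIV_chain2 by fastforce
qed

text \<open>Schwarz's lemma for \<open>\<xi> \<mapsto> \<psi>(t \<phi>(\<xi> x) + (1 - t) \<phi>(\<xi> \<zeta>))\<close>, \<open>\<zeta> = z\<^sub>0 / |z\<^sub>0|\<close>, at \<open>\<xi> = |z\<^sub>0|\<close>.\<close>
lemma norm_inverse_convex_combination_less:
  assumes z0: "norm z0 < 1" "z0 \<noteq> 0" and x: "norm x < 1" and t: "0 < t" "t \<le> 1"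
  shows "norm (\<psi> (of_real t * \<phi> (of_real (norm z0) * x) + of_real (1 - t) * \<phi> z0)) < norm z0"
proof -
  define r where "r = norm z0"
  have r: "0 < r" "r < 1"
    using z0 by (auto simp: r_def)
  define \<zeta> where "\<zeta> = z0 / of_real r"
  have \<zeta>: "norm \<zeta> = 1" "of_real r * \<zeta> = z0"
    using r by (simp_all add: \<zeta>_def norm_divide r_def)
  define I where "I \<xi> = of_real t * \<phi> (\<xi> * x) + of_real (1 - t) * \<phi> (\<xi> * \<zeta>)" for \<xi>
  define H where "H \<xi> = \<psi> (I \<xi>)" for \<xi>
  have I_image: "I \<xi> \<in> \<phi> ` ball 0 1" if "norm \<xi> < 1" for \<xi>
  proof -
    have "norm (\<xi> * x) < 1"
      using mult_strict_mono'[OF that x] by (simp add: norm_mult)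
    then show ?thesis
      unfolding I_def using that \<zeta> t by (intro convex_combination_in_image) (auto simp: norm_mult)
  qed
  have "I holomorphic_on ball 0 1"
    unfolding I_def using x \<zeta> by (intro holomorphic_intros holomorphic_on_ball_scale[OF holomorphic]) auto
  then have H: "H holomorphic_on ball 0 1"
    unfolding H_def using I_image
    by (intro holomorphic_on_compose_gen[OF _ holomorphic_inverse, unfolded o_def]) auto
  have H_disc: "norm (H \<xi>) < 1" if "norm \<xi> < 1" for \<xi>
    unfolding H_def by (rule norm_inverse_less_1[OF I_image[OF that]])
  have "H 0 = 0"
    by (simp add: H_def I_def zero inverse_zero)
  moreover have "norm (deriv H 0) < 1"
    using DERIV_imp_deriv[OF has_field_derivative_inverse_convex_combination_0[of t x \<zeta>]]
      norm_convex_combination_less_1[OF x \<zeta>(1) t]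
    by (simp add: H_def[abs_def] I_def)
  ultimately have "norm (H (of_real r)) < r"
    using Schwarz_Lemma_strict[OF H _ H_disc, of "of_real r"] r by simp
  then show ?thesis
    unfolding r_def[symmetric] by (simp add: H_def I_def \<zeta>)
qed

text \<open>For \<open>0 < u < 1\<close> and \<open>z\<^sub>0 \<noteq> 0\<close> this is a self-map of the disc with the boundary fixed point
  \<open>z\<^sub>0 / |z\<^sub>0|\<close>, where its derivative is \<open>1 - u\<close>.\<close>
definition julia_map :: "real \<Rightarrow> complex \<Rightarrow> complex \<Rightarrow> complex" where
  "julia_map u z0 \<eta> = \<psi> (of_real (1 - u) * \<phi> (\<eta> * of_real (norm z0)) + of_real u * \<phi> z0) / of_real (norm z0)"

lemma holomorphic_on_julia_map:
  assumes z0: "norm z0 < 1" "z0 \<noteq> 0" and u: "0 \<le> u" "u \<le> 1"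
  shows "julia_map u z0 holomorphic_on ball 0 1"
proof -
  define J where "J \<eta> = of_real (1 - u) * \<phi> (\<eta> * of_real (norm z0)) + of_real (1 - (1 - u)) * \<phi> z0" for \<eta>
  have "J \<eta> \<in> \<phi> ` ball 0 1" if "norm \<eta> < 1" for \<eta>
  proof -
    have "norm (\<eta> * of_real (norm z0)) < 1"
      using mult_strict_mono'[OF that z0(1)] by (simp add: norm_mult)
    then show ?thesis
      unfolding J_def using z0 u by (intro convex_combination_in_image) auto
  qed
  moreover have "J holomorphic_on ball 0 1"
    unfolding J_def using z0 by (intro holomorphic_intros holomorphic_on_ball_scale[OF holomorphic]) auto
  ultimately have "(\<lambda>\<eta>. \<psi> (J \<eta>)) holomorphic_on ball 0 1"
    by (intro holomorphic_on_compose_gen[OF _ holomorphic_inverse, unfolded o_def]) auto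
  then show ?thesis
    using z0 unfolding julia_map_def[abs_def] J_def by (intro holomorphic_intros) simp_all
qed

lemma norm_julia_map_less_1:
  assumes z0: "norm z0 < 1" "z0 \<noteq> 0" and u: "0 \<le> u" "u < 1" and \<eta>: "norm \<eta> < 1"
  shows "norm (julia_map u z0 \<eta>) < 1"
  using norm_inverse_convex_combination_less[OF z0 \<eta>, of "1 - u"] u z0
  by (simp add: julia_map_def norm_divide mult.commute)

lemma has_field_derivative_julia_map:
  assumes z0: "norm z0 < 1" "z0 \<noteq> 0"
  defines "\<zeta> \<equiv> z0 / of_real (norm z0)"
  shows "julia_map u z0 \<zeta> = \<zeta>" and "(julia_map u z0 has_field_derivative of_real (1 - u)) (at \<zeta>)"
proof -
  define r where "r = norm z0"
  have r: "0 < r" and \<zeta>_r: "\<zeta> * of_real r = z0"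
    using z0 by (simp_all add: \<zeta>_def r_def)
  define J where "J \<eta> = of_real (1 - u) * \<phi> (\<eta> * of_real r) + of_real u * \<phi> z0" for \<eta>
  have J_\<zeta>: "J \<zeta> = \<phi> z0"
    by (simp add: J_def \<zeta>_r algebra_simps)
  show "julia_map u z0 \<zeta> = \<zeta>"
    using inverse[of z0] z0 J_\<zeta> by (simp add: julia_map_def J_def r_def \<zeta>_def)
  have "(J has_field_derivative of_real (1 - u) * (deriv \<phi> z0 * of_real r)) (at \<zeta>)"
    using DERIV_add[OF DERIV_cmult[OF has_field_derivative_scaled[of \<zeta> "of_real r"]] DERIV_const,
        of "of_real (1 - u)" "of_real u * \<phi> z0"] z0
    by (simp add: J_def[abs_def] \<zeta>_r)
  moreover have "(\<psi> has_field_derivative inverse (deriv \<phi> z0)) (at (J \<zeta>))"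
    unfolding J_\<zeta> by (rule has_field_derivative_inverse[OF z0(1)])
  ultimately have "(julia_map u z0 has_field_derivative
      inverse (deriv \<phi> z0) * (of_real (1 - u) * (deriv \<phi> z0 * of_real r)) / of_real r) (at \<zeta>)"
    unfolding julia_map_def[abs_def] r_def[symmetric] J_def[symmetric]
    by (intro DERIV_cdivide) (rule DERIV_chain2)
  moreover have "inverse (deriv \<phi> z0) * (of_real (1 - u) * (deriv \<phi> z0 * of_real r)) / of_real r
      = of_real (1 - u)"
    using deriv_nonzero[OF z0(1)] r by (simp add: field_simps)
  ultimately show "(julia_map u z0 has_field_derivative of_real (1 - u)) (at \<zeta>)"
    by simp
qed

lemma julia_estimate_inverse:
  assumes z0: "norm z0 < 1" "z0 \<noteq> 0" and u: "0 < u" "u < 1"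
  shows "(norm (z0 - \<psi> (of_real u * \<phi> z0)))\<^sup>2
           \<le> (1 - u) * ((norm z0)\<^sup>2 - (norm (\<psi> (of_real u * \<phi> z0)))\<^sup>2)"
proof -
  define r where "r = norm z0"
  have r: "0 < r"
    using z0 by (simp add: r_def)
  define \<zeta> where "\<zeta> = z0 / of_real r"
  define G where "G = julia_map u z0"
  have "norm \<zeta> = 1"
    using r by (simp add: \<zeta>_def norm_divide r_def)
  with holomorphic_on_julia_map[OF z0] norm_julia_map_less_1[OF z0] has_field_derivative_julia_map[OF z0] u
  have julia: "(norm (\<zeta> - G 0))\<^sup>2 \<le> (1 - u) * (1 - (norm (G 0))\<^sup>2)"
    unfolding G_def \<zeta>_def r_def by (intro Julia_lemma) simp_all
  have G0: "G 0 = \<psi> (of_real u * \<phi> z0) / of_real r"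
    by (simp add: G_def julia_map_def zero r_def)
  then have "\<zeta> - G 0 = (z0 - \<psi> (of_real u * \<phi> z0)) / of_real r"
    by (simp add: \<zeta>_def diff_divide_distrib)
  then have "(norm (z0 - \<psi> (of_real u * \<phi> z0)))\<^sup>2 = r\<^sup>2 * (norm (\<zeta> - G 0))\<^sup>2"
    using r by (simp add: norm_divide power_divide)
  also have "\<dots> \<le> r\<^sup>2 * ((1 - u) * (1 - (norm (G 0))\<^sup>2))"
    using julia by (rule mult_left_mono) simp
  also have "\<dots> = (1 - u) * (r\<^sup>2 - (norm (\<psi> (of_real u * \<phi> z0)))\<^sup>2)"
    using r by (simp add: G0 norm_divide field_simps)
  finally show ?thesis
    by (simp add: r_def)
qed

lemma Re_cnj_mult_inverse_ge:
  assumes z0: "norm z0 < 1" "z0 \<noteq> 0" and u: "0 < u" "u < 1"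
  shows "u * (norm z0)\<^sup>2 \<le> 2 * Re (cnj z0 * \<psi> (of_real u * \<phi> z0))"
proof -
  define b where "b = \<psi> (of_real u * \<phi> z0)"
  have "(norm (z0 - b))\<^sup>2 = (norm z0)\<^sup>2 - 2 * Re (cnj z0 * b) + (norm b)\<^sup>2"
  proof -
    obtain x y v w where "z0 = Complex x y" "b = Complex v w"
      by (metis complex.exhaust)
    then show ?thesis
      by (simp add: cmod_power2) (simp add: power2_eq_square algebra_simps)
  qed
  with julia_estimate_inverse[OF z0 u] have "u * (norm z0)\<^sup>2 + (2 - u) * (norm b)\<^sup>2 \<le> 2 * Re (cnj z0 * b)"
    by (simp add: b_def algebra_simps)
  moreover have "0 \<le> (2 - u) * (norm b)\<^sup>2"
    using u by simp
  ultimately show ?thesis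
    by (simp add: b_def)
qed

lemma tendsto_inverse_scaled:
  assumes "w \<noteq> 0"
  shows "((\<lambda>u. \<psi> (of_real u * w) / of_real u) \<longlongrightarrow> w) (at_right 0)"
proof -
  have in_01: "\<forall>\<^sub>F u in at_right (0::real). u \<in> {0<..<1}"
    by (rule eventually_at_right_real) simp
  have "((\<lambda>v. (\<psi> v - \<psi> 0) / (v - 0)) \<longlongrightarrow> 1) (at 0)"
    using has_field_derivative_inverse[of 0] by (simp add: zero deriv_zero has_field_derivative_iff)
  then have \<psi>_lim: "((\<lambda>v. \<psi> v / v) \<longlongrightarrow> 1) (at 0)"
    by (simp add: inverse_zero)
  have "((\<lambda>u. of_real u * w) \<longlongrightarrow> of_real 0 * w) (at_right (0::real))"
    by (intro tendsto_intros)
  moreover have "\<forall>\<^sub>F u in at_right (0::real). of_real u * w \<noteq> 0"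
    using in_01 by eventually_elim (use assms in auto)
  ultimately have "filterlim (\<lambda>u. of_real u * w) (at 0) (at_right (0::real))"
    by (simp add: filterlim_at)
  from tendsto_mult_right[OF filterlim_compose[OF \<psi>_lim this], of w]
  have "((\<lambda>u. \<psi> (of_real u * w) / (of_real u * w) * w) \<longlongrightarrow> w) (at_right 0)"
    by simp
  moreover have "\<forall>\<^sub>F u in at_right 0. \<psi> (of_real u * w) / (of_real u * w) * w = \<psi> (of_real u * w) / of_real u"
    using in_01 by eventually_elim (use assms in auto)
  ultimately show ?thesis
    by (rule Lim_transform_eventually)
qed

lemma Re_div_ge_half:
  assumes z: "norm z < 1" "z \<noteq> 0"
  shows "1/2 \<le> Re (\<phi> z / z)"
proof -
  have "\<phi> z \<noteq> 0"
    using inj_onD[OF inj, of z 0] z by (auto simp: zero)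
  from tendsto_inverse_scaled[OF this]
  have "((\<lambda>u. 2 * Re (cnj z * (\<psi> (of_real u * \<phi> z) / of_real u)))
      \<longlongrightarrow> 2 * Re (cnj z * \<phi> z)) (at_right 0)"
    by (intro tendsto_intros)
  moreover have "\<forall>\<^sub>F u in at_right (0::real). u \<in> {0<..<1}"
    by (rule eventually_at_right_real) simp
  then have "\<forall>\<^sub>F u in at_right 0. (norm z)\<^sup>2 \<le> 2 * Re (cnj z * (\<psi> (of_real u * \<phi> z) / of_real u))"
  proof eventually_elim
    case (elim u)
    with Re_cnj_mult_inverse_ge[OF z, of u] show ?case
      by (simp add: field_simps)
  qed
  ultimately have le: "(norm z)\<^sup>2 \<le> 2 * Re (cnj z * \<phi> z)"
    by (rule tendsto_le[OF trivial_limit_at_right_real _ tendsto_const])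
  have "(of_real (norm z))\<^sup>2 = z * cnj z"
    using complex_norm_square[of z] by simp
  then have "\<phi> z / z = cnj z * \<phi> z / of_real ((norm z)\<^sup>2)"
    using z by (simp add: field_simps)
  then have "Re (\<phi> z / z) = Re (cnj z * \<phi> z) / (norm z)\<^sup>2"
    by (simp only: Re_divide_of_real)
  moreover have "1/2 \<le> A / N" if "N \<le> 2 * A" "0 < N" for A N :: real
    using that by (simp add: field_simps)
  ultimately show ?thesis
    using le z by simp
qed

end

theorem Marx_Strohhaecker:
  assumes \<phi>: "convK \<phi>" and z: "norm z < 1" "z \<noteq> 0"
  shows "1/2 \<le> Re (\<phi> z / z)"
proof -
  have "\<phi> holomorphic_on ball 0 1" "inj_on \<phi> (ball 0 1)"
    using \<phi> by (auto simp: convK_def)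
  from holomorphic_has_inverse[OF this(1) open_ball this(2)]
  obtain \<psi> where "\<psi> holomorphic_on \<phi> ` ball 0 1"
      "\<And>z. z \<in> ball 0 1 \<Longrightarrow> deriv \<phi> z * deriv \<psi> (\<phi> z) = 1"
      "\<And>z. z \<in> ball 0 1 \<Longrightarrow> \<psi> (\<phi> z) = z"
    by blast
  with \<phi> interpret convK_inverse \<phi> \<psi>
    by unfold_locales auto
  show ?thesis
    by (rule Re_div_ge_half[OF z])
qed

section \<open>Convolution with convex functions\<close>

definition Lop_fps :: "real \<Rightarrow> real \<Rightarrow> complex fps \<Rightarrow> complex fps" where
  "Lop_fps \<gamma> \<delta> A = fps_const (of_real \<gamma>) * fps_deriv A
     + fps_const (of_real \<delta>) * (fps_X * fps_deriv (fps_deriv A))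
     + fps_const (of_real ((\<delta> - \<gamma>) / 2)) * (fps_X ^ 2 * fps_deriv (fps_deriv (fps_deriv A)))"

lemma fps_nth_Lop_fps:
  "fps_nth (Lop_fps \<gamma> \<delta> A) n = of_nat (n + 1)
     * (of_real \<gamma> + of_real \<delta> * of_nat n + of_real ((\<delta> - \<gamma>) / 2) * of_nat n * (of_nat n - 1))
     * fps_nth A (n + 1)"
proof (cases n)
  case 0
  then show ?thesis
    by (simp add: Lop_fps_def fps_X_power_mult_nth)
next
  case (Suc m)
  then show ?thesis
    by (cases m) (simp_all add: Lop_fps_def fps_X_power_mult_nth, simp_all add: algebra_simps)
qed

lemma Lop_fps_hadamard:
  "Lop_fps \<gamma> \<delta> (fps_hadamard A C) = fps_hadamard (Lop_fps \<gamma> \<delta> A) (fps_shift 1 C)"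
  by (rule fps_ext) (simp add: fps_nth_Lop_fps)

lemma Lop_eq_eval_Lop_fps:
  assumes g: "g holomorphic_on ball 0 1" and z: "norm z < 1"
  shows "Lop \<gamma> \<delta> g z = eval_fps (Lop_fps \<gamma> \<delta> (taylor_fps g)) z"
proof -
  define A where "A = taylor_fps g"
  have A: "1 \<le> fps_conv_radius ((fps_deriv ^^ k) A)" for k
    unfolding A_def by (intro fps_conv_radius_higher_deriv fps_conv_radius_taylor_fps g)
  have deriv_eq: "(deriv ^^ k) g z = eval_fps ((fps_deriv ^^ k) A) z" for k
    unfolding A_def by (rule higher_deriv_eq_eval_taylor_fps[OF g z])
  have radius: "ereal (norm z) < fps_conv_radius B" if "1 \<le> fps_conv_radius B" for B :: "complex fps"
    using ereal_norm_less_fps_conv_radius[OF that z] .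
  have "deriv g z = eval_fps (fps_deriv A) z"
    using deriv_eq[of 1] by simp
  moreover have "(deriv ^^ 2) g z = eval_fps (fps_deriv (fps_deriv A)) z"
    using deriv_eq[of 2] by (simp add: numeral_2_eq_2)
  moreover have "(deriv ^^ 3) g z = eval_fps (fps_deriv (fps_deriv (fps_deriv A))) z"
    using deriv_eq[of 3] by (simp add: numeral_3_eq_3)
  moreover have "1 \<le> fps_conv_radius (fps_deriv A)" "1 \<le> fps_conv_radius (fps_deriv (fps_deriv A))"
    "1 \<le> fps_conv_radius (fps_deriv (fps_deriv (fps_deriv A)))"
    using A[of 1] A[of 2] A[of 3] by (simp_all add: numeral_2_eq_2 numeral_3_eq_3)
  ultimately show ?thesis
    unfolding Lop_def Lop_fps_def A_def[symmetric]
    by (simp add: eval_fps_add eval_fps_mult radius one_le_fps_conv_radius_add one_le_fps_conv_radius_mult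
        mult_ac)
qed

lemma fps_conv_radius_Lop_fps:
  "1 \<le> fps_conv_radius A \<Longrightarrow> 1 \<le> fps_conv_radius (Lop_fps \<gamma> \<delta> A)"
  unfolding Lop_fps_def
  by (intro one_le_fps_conv_radius_add one_le_fps_conv_radius_mult order_trans[OF _ fps_conv_radius_deriv]) simp_all

lemma holomorphic_on_hadamard:
  assumes "g holomorphic_on ball 0 1" "h holomorphic_on ball 0 1"
  shows "hadamard g h holomorphic_on ball 0 1"
  unfolding hadamard_eq_eval_fps
  by (intro holomorphic_on_eval_fps_ball fps_conv_radius_hadamard fps_conv_radius_taylor_fps assms)

lemma taylor_fps_hadamard:
  assumes "g holomorphic_on ball 0 1" "h holomorphic_on ball 0 1"
  shows "taylor_fps (hadamard g h) = fps_hadamard (taylor_fps g) (taylor_fps h)"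
proof -
  have "1 \<le> fps_conv_radius (fps_hadamard (taylor_fps g) (taylor_fps h))"
    by (intro fps_conv_radius_hadamard fps_conv_radius_taylor_fps assms)
  then show ?thesis
    unfolding hadamard_eq_eval_fps by (intro taylor_fps_eval_fps) (simp add: less_le_trans[of 0 1])
qed

lemma Lop_hadamard:
  assumes g: "g holomorphic_on ball 0 1" and h: "h holomorphic_on ball 0 1" and z: "norm z < 1"
  shows "Lop \<gamma> \<delta> (hadamard g h) z
           = eval_fps (fps_hadamard (Lop_fps \<gamma> \<delta> (taylor_fps g)) (fps_shift 1 (taylor_fps h))) z"
  using Lop_eq_eval_Lop_fps[OF holomorphic_on_hadamard[OF g h] z]
  by (simp add: taylor_fps_hadamard[OF g h] Lop_fps_hadamard)

lemma classH0_hadamard: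
  assumes st: "classH0 s t" and \<phi>: "\<phi> holomorphic_on ball 0 1" "\<phi> 0 = 0" "deriv \<phi> 0 = 1"
  shows "classH0 (hadamard s \<phi>) (hadamard t \<phi>)"
proof -
  have s: "s holomorphic_on ball 0 1" and t: "t holomorphic_on ball 0 1"
    using st by (auto simp: classH0_def)
  have "tcoeff (hadamard g \<phi>) n = tcoeff g n * tcoeff \<phi> n" if "g holomorphic_on ball 0 1" for g n
    using arg_cong[OF taylor_fps_hadamard[OF that \<phi>(1)], of "\<lambda>A. fps_nth A n"] by simp
  from this[of _ 0] this[of _ "Suc 0"] st \<phi> s t show ?thesis
    unfolding classH0_def by (simp add: holomorphic_on_hadamard tcoeff_0 tcoeff_1)
qed

lemma Re_eval_fps_shift_taylor_fps_convK:
  assumes \<phi>: "convK \<phi>" and w: "norm w < 1"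
  shows "1/2 \<le> Re (eval_fps (fps_shift 1 (taylor_fps \<phi>)) w)"
proof -
  have hol: "\<phi> holomorphic_on ball 0 1" and "\<phi> 0 = 0" "deriv \<phi> 0 = 1"
    using \<phi> by (auto simp: convK_def)
  then have "fps_nth (taylor_fps \<phi>) (Suc 0) \<noteq> 0"
    by (simp add: tcoeff_1)
  then have "taylor_fps \<phi> \<noteq> 0"
    by (metis fps_zero_nth)
  then have "1 \<le> subdegree (taylor_fps \<phi>)"
    by (rule subdegree_geI) (simp add: tcoeff_0 \<open>\<phi> 0 = 0\<close>)
  with w have "eval_fps (fps_shift 1 (taylor_fps \<phi>)) w = (if w = 0 then 1 else \<phi> w / w)"
    by (simp add: eval_fps_shift ereal_norm_less_fps_conv_radius fps_conv_radius_taylor_fps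
        eval_taylor_fps hol tcoeff_1 \<open>deriv \<phi> 0 = 1\<close>)
  with Marx_Strohhaecker[OF \<phi> w] show ?thesis
    by simp
qed

lemma unimodular_rotation_to_neg_real:
  fixes v :: complex
  obtains \<epsilon> where "norm \<epsilon> = 1" "\<epsilon> * v = - of_real (norm v)"
proof (cases "v = 0")
  case True
  then show ?thesis
    using that[of 1] by simp
next
  case False
  have "- cnj v / of_real (norm v) * v = - of_real (norm v)"
    using False complex_norm_square[of v] by (simp add: power2_eq_square field_simps mult.commute)
  with False show ?thesis
    using that[of "- cnj v / of_real (norm v)"] by (simp add: norm_divide)
qed

text \<open>Rotating \<open>G\<close> by a unimodular \<open>\<epsilon>\<close> with \<open>\<epsilon> (G \<star> P)(z) = -|(G \<star> P)(z)|\<close> reduces the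
  claim to positivity of the real part of \<open>(F + \<epsilon> G - c) \<star> P\<close>.\<close>
lemma norm_eval_fps_hadamard_less:
  fixes F G P :: "complex fps" and c :: real
  assumes F: "1 \<le> fps_conv_radius F" and G: "1 \<le> fps_conv_radius G"
    and P: "1 \<le> fps_conv_radius P" and P0: "fps_nth P 0 = 1"
    and Re_P: "\<And>w. norm w < 1 \<Longrightarrow> 1/2 \<le> Re (eval_fps P w)"
    and dominated: "\<And>w. norm w < 1 \<Longrightarrow> norm (eval_fps G w) < Re (eval_fps F w) - c"
    and z: "norm z < 1"
  shows "norm (eval_fps (fps_hadamard G P) z) < Re (eval_fps (fps_hadamard F P) z) - c"
proof -
  define v where "v = eval_fps (fps_hadamard G P) z"
  obtain \<epsilon> where \<epsilon>: "norm \<epsilon> = 1" "\<epsilon> * v = - of_real (norm v)"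
    by (rule unimodular_rotation_to_neg_real)
  have radius: "ereal (norm w) < fps_conv_radius A" if "1 \<le> fps_conv_radius A" "norm w < 1"
    for A :: "complex fps" and w :: complex
    using ereal_norm_less_fps_conv_radius[OF that] .
  define Q where "Q = F + fps_const \<epsilon> * G - fps_const (of_real c)"
  have Q: "1 \<le> fps_conv_radius Q"
    unfolding Q_def by (intro one_le_fps_conv_radius_diff one_le_fps_conv_radius_add
        one_le_fps_conv_radius_mult F G) simp_all
  have "0 < Re (eval_fps Q w)" if w: "norm w < 1" for w
  proof -
    have "- norm (eval_fps G w) \<le> Re (\<epsilon> * eval_fps G w)"
      using abs_Re_le_cmod[of "\<epsilon> * eval_fps G w"] \<epsilon>(1) by (simp add: norm_mult)
    with dominated[OF w] show ?thesis
      unfolding Q_def using w F G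
      by (simp add: eval_fps_add eval_fps_diff eval_fps_mult radius one_le_fps_conv_radius_add
          one_le_fps_conv_radius_mult)
  qed
  from Re_eval_fps_hadamard_pos[OF Q P P0 Re_P this z]
  have "0 < Re (eval_fps (fps_hadamard Q P) z)" .
  moreover have "fps_hadamard Q P
      = fps_hadamard F P + fps_const \<epsilon> * fps_hadamard G P - fps_const (of_real c)"
    unfolding Q_def using P0 by (intro fps_ext) (simp add: algebra_simps)
  moreover have "1 \<le> fps_conv_radius (fps_hadamard F P)" "1 \<le> fps_conv_radius (fps_hadamard G P)"
    using F G P by (simp_all add: fps_conv_radius_hadamard)
  ultimately show ?thesis
    using z \<epsilon>(2) unfolding v_def
    by (simp add: eval_fps_add eval_fps_diff eval_fps_mult radius one_le_fps_conv_radius_add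
        one_le_fps_conv_radius_mult)
qed

theorem corollary18:
  fixes \<gamma> \<delta> lam :: real and s t \<phi> :: "complex \<Rightarrow> complex"
  assumes "0 \<le> lam" "lam < \<gamma>" "\<gamma> \<le> \<delta>"
    and "RH0 \<gamma> \<delta> lam s t"
    and "convK \<phi>"
  shows "RH0 \<gamma> \<delta> lam (hadamard s \<phi>) (hadamard t \<phi>)"
proof -
  note \<phi> = \<open>convK \<phi>\<close>
  have st: "classH0 s t"
    and dominated: "\<And>z. norm z < 1 \<Longrightarrow> norm (Lop \<gamma> \<delta> t z) < Re (Lop \<gamma> \<delta> s z) - lam"
    using \<open>RH0 \<gamma> \<delta> lam s t\<close> by (auto simp: RH0_def)
  have s: "s holomorphic_on ball 0 1" and t: "t holomorphic_on ball 0 1"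
    and \<phi>_hol: "\<phi> holomorphic_on ball 0 1" and "\<phi> 0 = 0" "deriv \<phi> 0 = 1"
    using st \<phi> by (auto simp: classH0_def convK_def)
  define P where "P = fps_shift 1 (taylor_fps \<phi>)"
  have P: "1 \<le> fps_conv_radius P" "fps_nth P 0 = 1"
    "\<And>w. norm w < 1 \<Longrightarrow> 1/2 \<le> Re (eval_fps P w)"
    using fps_conv_radius_taylor_fps[OF \<phi>_hol] Re_eval_fps_shift_taylor_fps_convK[OF \<phi>]
    by (simp_all add: P_def tcoeff_1 \<open>deriv \<phi> 0 = 1\<close>)
  have "norm (Lop \<gamma> \<delta> (hadamard t \<phi>) z) < Re (Lop \<gamma> \<delta> (hadamard s \<phi>) z) - lam" if "norm z < 1" for z
    unfolding Lop_hadamard[OF s \<phi>_hol that] Lop_hadamard[OF t \<phi>_hol that] P_def[symmetric]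
    using P dominated that
    by (intro norm_eval_fps_hadamard_less fps_conv_radius_Lop_fps fps_conv_radius_taylor_fps s t)
      (simp_all add: Lop_eq_eval_Lop_fps s t)
  with classH0_hadamard[OF st \<phi>_hol \<open>\<phi> 0 = 0\<close> \<open>deriv \<phi> 0 = 1\<close>] show ?thesis
    by (simp add: RH0_def)
qed

end
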